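(* Let $f,g$ be real analytic functions on $[-1,1]$, and for $\rho\in\mathbb{R}$ with $|\rho|$ sufficiently small let $x(t,\rho)$ denote the solution on $[-1,1]$ of the Abel equation $x'=f(t)x^3+g(t)x^2$ with $x(-1,\rho)=\rho$. Define $$H(t,\rho)=\int_{-1}^t\big(f(s)x(s,\rho)+g(s)\big)\,ds,\qquad G(t)=\int_{-1}^t g(s)\,ds,\qquad F(t)=\int_{-1}^t f(s)\,ds.$$ Then $$\frac{\partial^{j}}{\partial\rho^{j}}H(1,\rho)\Big|_{\rho=0}=j!\int_{-1}^1 f(t)\,G^{j-1}(t)\,dt\quad\text{for } j=1,2,$$ and $$\frac{\partial^{3}}{\partial\rho^{3}}H(1,\rho)\Big|_{\rho=0}=3!\int_{-1}^1 f(t)\,G^{2}(t)\,dt+3!\int_{-1}^1 f(t)\,F(t)\,dt.$$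
   Context: The solution $x(t,\rho)$ is analytic in $(t,\rho)$ and equivalently satisfies the integral equation $x(t,\rho)=\dfrac{\rho}{1-\rho H(t,\rho)}$ for $t\in[-1,1]$ and $|\rho|$ small. *)

theory Defs
  imports "HOL-Analysis.Analysis"
begin

definition real_analytic_on :: "(real \<Rightarrow> real) \<Rightarrow> real set \<Rightarrow> bool" where
  "real_analytic_on f S \<longleftrightarrow>
     (\<forall>x0\<in>S. \<exists>r>0. \<exists>a::nat \<Rightarrow> real. \<forall>y. \<bar>y - x0\<bar> < r \<longrightarrow> (\<lambda>n. a n * (y - x0) ^ n) sums f y)"

end

theory Submission
  imports Defs
begin

text \<open>Both \<open>x(t,\<rho>)\<close> and the difference \<open>x(t,\<sigma>) - x(t,\<rho>)\<close> satisfy linear differential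
equations in \<open>t\<close>, so they are \<open>\<rho>\<close>, resp. \<open>\<sigma> - \<rho>\<close>, times the exponential of an integral.
For small \<open>\<rho>\<close> a continuity argument gives \<open>|x(t,\<rho>)| \<le> 2|\<rho>|\<close>, which keeps these exponents
small; this yields a Lipschitz bound in \<open>\<rho>\<close>, joint continuity, and, from the difference
quotient, \<open>\<partial>\<^sub>\<rho>x = exp \<integral>(3fx\<^sup>2 + 2gx)\<close>. Differentiating under the integral sign twice more
gives closed formulas for \<open>\<partial>\<^sub>\<rho>\<^sup>2x\<close> and \<open>\<partial>\<^sub>\<rho>\<^sup>3x\<close>, hence for the \<open>\<rho>\<close>-derivatives of
\<open>H(1,\<rho>) = \<integral>(fx + g)\<close>. At \<open>\<rho> = 0\<close>, where \<open>x\<close> vanishes, these formulas reduce to \<open>1\<close>, \<open>2G\<close>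
and \<open>6G\<^sup>2 + 6F\<close> (using \<open>\<integral>gG = G\<^sup>2/2\<close>).\<close>

lemma real_analytic_on_imp_continuous_on:
  assumes "real_analytic_on f S"
  shows "continuous_on S f"
proof (rule continuous_at_imp_continuous_on, rule ballI)
  fix x0 assume "x0 \<in> S"
  with assms obtain r a where r: "r > 0"
    and a: "\<And>y. \<bar>y - x0\<bar> < r \<Longrightarrow> (\<lambda>n. a n * (y - x0) ^ n) sums f y"
    unfolding real_analytic_on_def by blast
  have "summable (\<lambda>n. a n * (r/2) ^ n)"
    using a[of "x0 + r/2"] r by (auto simp: sums_iff)
  then have "isCont (\<lambda>h. \<Sum>n. a n * h ^ n) (x0 - x0)"
    by (rule isCont_powser) (use r in auto)
  then have series_cont: "isCont (\<lambda>y. \<Sum>n. a n * (y - x0) ^ n) x0"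
    by (rule isCont_o2[rotated]) (intro continuous_intros)
  have "\<forall>\<^sub>F y in nhds x0. y \<in> ball x0 r"
    using r by (intro eventually_nhds_in_open) auto
  then have "\<forall>\<^sub>F y in nhds x0. (\<Sum>n. a n * (y - x0) ^ n) = f y"
    by eventually_elim (use a in \<open>auto simp: sums_iff dist_real_def abs_minus_commute\<close>)
  from isCont_cong[OF this] series_cont show "isCont f x0"
    by simp
qed

lemma linear_ode_eq_exp_integral:
  fixes w c :: "real \<Rightarrow> real"
  assumes c: "continuous_on {a..b} c"
    and w: "\<And>s. s \<in> {a..b} \<Longrightarrow> (w has_real_derivative c s * w s) (at s within {a..b})"
    and t: "t \<in> {a..b}"
  shows "w t = w a * exp (integral {a..t} c)"
proof -
  define v where "v s = w s * exp (- integral {a..s} c)" for s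
  have "(v has_real_derivative 0) (at s within {a..b})" if s: "s \<in> {a..b}" for s
  proof -
    have "((\<lambda>s. integral {a..s} c) has_real_derivative c s) (at s within {a..b})"
      by (rule integral_has_real_derivative[OF c s])
    from DERIV_mult[OF w[OF s] DERIV_chain2[OF DERIV_exp DERIV_minus[OF this]]]
    show ?thesis unfolding v_def by (simp add: algebra_simps)
  qed
  then obtain k where "\<And>s. s \<in> {a..b} \<Longrightarrow> v s = k"
    using has_field_derivative_zero_constant[of "{a..b}" v] by auto
  then have "v t = v a"
    using t by fastforce
  then show ?thesis unfolding v_def by (simp add: exp_minus field_simps)
qed

lemma affine_unit_interval_mem:
  fixes a t u :: real
  assumes "a \<le> t" and "u \<in> {0..1}"
  shows "a + u * (t - a) \<in> {a..t}"
proof -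
  have "u * (t - a) \<le> 1 * (t - a)"
    using assms by (intro mult_right_mono) auto
  then show ?thesis
    using assms by simp
qed

lemma integral_rescale_unit_interval:
  fixes h :: "real \<Rightarrow> real"
  assumes h: "continuous_on {a..t} h" and "a \<le> t"
  shows "integral {a..t} h = integral {0..1} (\<lambda>u. (t - a) * h (a + u * (t - a)))"
proof -
  have "((\<lambda>u. (t - a) *\<^sub>R h (a + u * (t - a))) has_integral
      integral {a + 0 * (t - a)..a + 1 * (t - a)} h) {0..1}"
    using h \<open>a \<le> t\<close> affine_unit_interval_mem[OF \<open>a \<le> t\<close>]
    by (intro has_integral_substitution[where c=a and d=t]) (auto intro!: derivative_eq_intros)
  from integral_unique[OF this] show ?thesis
    by simp
qed

lemma continuous_on_integral_upper_param:
  fixes \<phi> :: "'a::topological_space \<Rightarrow> real \<Rightarrow> real"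
  assumes \<phi>: "continuous_on (U \<times> {a..b}) (\<lambda>p. \<phi> (fst p) (snd p))"
  shows "continuous_on (U \<times> {a..b}) (\<lambda>p. integral {a..snd p} (\<phi> (fst p)))"
proof -
  define \<gamma> where "\<gamma> q = (fst (fst q), a + snd q * (snd (fst q) - a))" for q :: "('a \<times> real) \<times> real"
  have "\<gamma> ` ((U \<times> {a..b}) \<times> cbox 0 1) \<subseteq> U \<times> {a..b}"
    using affine_unit_interval_mem by (fastforce simp: \<gamma>_def)
  then have "continuous_on ((U \<times> {a..b}) \<times> cbox 0 1) (\<lambda>q. \<phi> (fst (\<gamma> q)) (snd (\<gamma> q)))"
    by (rule continuous_on_compose2[OF \<phi>, rotated]) (auto simp: \<gamma>_def intro!: continuous_intros)
  then have "continuous_on ((U \<times> {a..b}) \<times> cbox 0 1)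
      (\<lambda>(p, u). (snd p - a) * \<phi> (fst p) (a + u * (snd p - a)))"
    unfolding case_prod_beta by (intro continuous_intros) (simp add: \<gamma>_def)
  then have cont: "continuous_on (U \<times> {a..b})
      (\<lambda>p. integral (cbox 0 1) (\<lambda>u. (snd p - a) * \<phi> (fst p) (a + u * (snd p - a))))"
    by (rule integral_continuous_on_param)
  have rescale: "integral {a..t} (\<phi> \<rho>) = integral {0..1} (\<lambda>u. (t - a) * \<phi> \<rho> (a + u * (t - a)))"
    if "\<rho> \<in> U" "t \<in> {a..b}" for \<rho> t
  proof (rule integral_rescale_unit_interval)
    have "(\<lambda>s. (\<rho>, s)) ` {a..t} \<subseteq> U \<times> {a..b}"
      using that by auto
    from continuous_on_compose2[OF \<phi> _ this] show "continuous_on {a..t} (\<phi> \<rho>)"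
      by (simp add: continuous_on_Pair)
  qed (use that in auto)
  from cont show ?thesis
    by (rule continuous_on_eq) (auto simp: rescale)
qed

lemma has_real_derivative_integral_param:
  fixes \<phi> \<psi> :: "real \<Rightarrow> real \<Rightarrow> real"
  assumes U: "open U" "convex U" "\<rho> \<in> U" and t: "t \<in> {a..b}"
    and \<phi>_deriv: "\<And>\<sigma> s. \<sigma> \<in> U \<Longrightarrow> s \<in> {a..b} \<Longrightarrow> ((\<lambda>\<sigma>. \<phi> \<sigma> s) has_real_derivative \<psi> \<sigma> s) (at \<sigma>)"
    and \<phi>: "continuous_on (U \<times> {a..b}) (\<lambda>p. \<phi> (fst p) (snd p))"
    and \<psi>: "continuous_on (U \<times> {a..b}) (\<lambda>p. \<psi> (fst p) (snd p))"
  shows "((\<lambda>\<sigma>. integral {a..t} (\<phi> \<sigma>)) has_real_derivative integral {a..t} (\<psi> \<rho>)) (at \<rho>)"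
proof -
  have sub: "U \<times> cbox a t \<subseteq> U \<times> {a..b}"
    using t by auto
  have "((\<lambda>\<sigma>. integral (cbox a t) (\<phi> \<sigma>)) has_real_derivative integral (cbox a t) (\<psi> \<rho>))
      (at \<rho> within U)"
  proof (rule leibniz_rule_field_derivative[OF _ _ _ U(3) U(2)])
    show "((\<lambda>\<sigma>. \<phi> \<sigma> s) has_real_derivative \<psi> \<sigma> s) (at \<sigma> within U)"
      if "\<sigma> \<in> U" "s \<in> cbox a t" for \<sigma> s
      using that t by (auto intro!: has_field_derivative_at_within[OF \<phi>_deriv])
    show "\<phi> \<sigma> integrable_on cbox a t" if "\<sigma> \<in> U" for \<sigma>
    proof (rule integrable_continuous)
      have "continuous_on (cbox a t) (\<lambda>s. (\<sigma>, s))"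
        by (intro continuous_intros)
      moreover have "(\<lambda>s. (\<sigma>, s)) ` cbox a t \<subseteq> U \<times> {a..b}"
        using that t by auto
      ultimately show "continuous_on (cbox a t) (\<phi> \<sigma>)"
        using continuous_on_compose2[OF \<phi>] by fastforce
    qed
    show "continuous_on (U \<times> cbox a t) (\<lambda>(\<sigma>, s). \<psi> \<sigma> s)"
      using continuous_on_subset[OF \<psi> sub] by (simp add: case_prod_beta)
  qed
  then show ?thesis
    by (simp add: at_within_open[OF U(3) U(1)])
qed

lemma continuous_on_prod_lipschitz_param:
  fixes \<phi> :: "'a::metric_space \<Rightarrow> 'b::metric_space \<Rightarrow> 'c::metric_space"
  assumes cont: "\<And>\<rho>. \<rho> \<in> U \<Longrightarrow> continuous_on T (\<phi> \<rho>)"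
    and lipschitz: "\<And>\<sigma> \<rho> t. \<sigma> \<in> U \<Longrightarrow> \<rho> \<in> U \<Longrightarrow> t \<in> T \<Longrightarrow> dist (\<phi> \<sigma> t) (\<phi> \<rho> t) \<le> L * dist \<sigma> \<rho>"
  shows "continuous_on (U \<times> T) (\<lambda>p. \<phi> (fst p) (snd p))"
  unfolding continuous_on_iff
proof (safe)
  fix \<rho> t e assume \<rho>: "\<rho> \<in> U" and t: "t \<in> T" and e: "(0::real) < e"
  obtain d1 where d1: "d1 > 0"
    and close_t: "\<And>t'. t' \<in> T \<Longrightarrow> dist t' t < d1 \<Longrightarrow> dist (\<phi> \<rho> t') (\<phi> \<rho> t) < e/2"
    using cont[OF \<rho>] t e unfolding continuous_on_iff by (metis half_gt_zero)
  define d where "d = min d1 (e / (2 * (\<bar>L\<bar> + 1)))"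
  have d: "d > 0"
    using d1 e by (simp add: d_def)
  have "dist (\<phi> \<sigma> t') (\<phi> \<rho> t) < e" if "\<sigma> \<in> U" "t' \<in> T" "dist (\<sigma>, t') (\<rho>, t) < d" for \<sigma> t'
  proof -
    have "dist \<sigma> \<rho> < d" "dist t' t < d"
      using that(3) dist_fst_le[of "(\<sigma>, t')" "(\<rho>, t)"] dist_snd_le[of "(\<sigma>, t')" "(\<rho>, t)"]
      by auto
    have "L * dist \<sigma> \<rho> \<le> (\<bar>L\<bar> + 1) * d"
      using \<open>dist \<sigma> \<rho> < d\<close> by (intro mult_mono) auto
    also have "\<dots> \<le> (\<bar>L\<bar> + 1) * (e / (2 * (\<bar>L\<bar> + 1)))"
      by (intro mult_left_mono) (auto simp: d_def)
    also have "\<dots> = e/2"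
      by (simp add: field_simps)
    finally have "dist (\<phi> \<sigma> t') (\<phi> \<rho> t') \<le> e/2"
      using lipschitz[OF that(1) \<rho> that(2)] by linarith
    moreover have "dist (\<phi> \<rho> t') (\<phi> \<rho> t) < e/2"
      using close_t[OF that(2)] \<open>dist t' t < d\<close> by (simp add: d_def)
    ultimately show ?thesis
      using dist_triangle[of "\<phi> \<sigma> t'" "\<phi> \<rho> t" "\<phi> \<rho> t'"] by linarith
  qed
  with d show "\<exists>d>0. \<forall>p\<in>U \<times> T. dist p (\<rho>, t) < d \<longrightarrow>
      dist (\<phi> (fst p) (snd p)) (\<phi> (fst (\<rho>, t)) (snd (\<rho>, t))) < e"
    by (intro exI[of _ d]) auto
qed

lemma continuous_on_snd_comp:
  "continuous_on T h \<Longrightarrow> continuous_on (U \<times> T) (\<lambda>p. h (snd p))"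
  by (rule continuous_on_compose2[where g=h]) (auto intro!: continuous_intros)

lemma abs_integral_upper_le:
  fixes h :: "real \<Rightarrow> real"
  assumes h: "continuous_on {a..b} h" and t: "t \<in> {a..b}" and K: "\<And>s. s \<in> {a..t} \<Longrightarrow> \<bar>h s\<bar> \<le> K"
  shows "\<bar>integral {a..t} h\<bar> \<le> K * (b - a)"
proof -
  have "0 \<le> K"
    using K[of a] t by auto
  have "continuous_on {a..t} h"
    using h t by (auto intro: continuous_on_subset)
  then have "\<bar>integral {a..t} h\<bar> \<le> K * (t - a)"
    using integral_bound[of a t h K] t K by auto
  also have "\<dots> \<le> K * (b - a)"
    using t \<open>0 \<le> K\<close> by (intro mult_left_mono) auto
  finally show ?thesis .
qed

lemma integral_mult_indefinite_integral:
  fixes g :: "real \<Rightarrow> real"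
  assumes g: "continuous_on {a..b} g" and t: "t \<in> {a..b}"
  shows "integral {a..t} (\<lambda>s. g s * integral {a..s} g) = (integral {a..t} g)\<^sup>2 / 2"
proof -
  define G where "G s = integral {a..s} g" for s
  have "((\<lambda>s. g s * G s) has_integral (G t)\<^sup>2 / 2 - (G a)\<^sup>2 / 2) {a..t}"
  proof (rule fundamental_theorem_of_calculus)
    show "a \<le> t"
      using t by auto
    fix u assume u: "u \<in> {a..t}"
    have "(G has_real_derivative g u) (at u within {a..t})"
      unfolding G_def
      by (rule DERIV_subset[OF integral_has_real_derivative[OF g]]) (use t u in auto)
    from DERIV_cdivide[OF DERIV_mult[OF this this], of 2]
    show "((\<lambda>u. (G u)\<^sup>2 / 2) has_vector_derivative g u * G u) (at u within {a..t})"
      by (simp add: power2_eq_square has_real_derivative_iff_has_vector_derivative mult.commute)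
  qed
  then show ?thesis
    by (simp add: G_def integral_unique)
qed

lemma bootstrap_continuous_on_less:
  fixes u :: "real \<Rightarrow> real"
  assumes cont: "continuous_on {a..b} u" and start: "u a < c"
    and step: "\<And>t. t \<in> {a..b} \<Longrightarrow> (\<And>s. s \<in> {a..t} \<Longrightarrow> u s \<le> c) \<Longrightarrow> u t < c"
    and t: "t \<in> {a..b}"
  shows "u t < c"
proof (rule ccontr)
  assume "\<not> u t < c"
  define S where "S = {a..b} \<inter> u -` {c..}"
  have "t \<in> S"
    using t \<open>\<not> u t < c\<close> by (auto simp: S_def)
  have "closed S"
    unfolding S_def by (intro continuous_closed_preimage cont) auto
  moreover have "bdd_below S"
    by (rule bdd_belowI[of _ a]) (auto simp: S_def)
  ultimately have t1: "Inf S \<in> S"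
    using \<open>t \<in> S\<close> by (intro closed_contains_Inf) auto
  \<comment> \<open>Before its first entry into \<open>S\<close> the function stays below \<open>c\<close>, by the intermediate value theorem.\<close>
  have "u s \<le> c" if s: "s \<in> {a..Inf S}" for s
  proof (rule ccontr)
    assume "\<not> u s \<le> c"
    moreover have "s \<in> {a..b}"
      using s t1 by (auto simp: S_def)
    ultimately obtain v where v: "a \<le> v" "v \<le> s" "u v = c"
      using IVT'[of u a c s] start continuous_on_subset[OF cont] by fastforce
    then have "v \<in> S"
      using \<open>s \<in> {a..b}\<close> by (auto simp: S_def)
    then have "Inf S \<le> v"
      by (rule cInf_lower) fact
    then have "v = s"
      using v s by auto
    with v \<open>\<not> u s \<le> c\<close> show False
      by simp
  qed
  then have "u (Inf S) < c"
    using t1 by (intro step) (auto simp: S_def)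
  with t1 show False
    by (auto simp: S_def)
qed

lemma funpow_deriv_eq_on_open:
  fixes D :: "nat \<Rightarrow> real \<Rightarrow> real"
  assumes U: "open U"
    and D: "\<And>k \<rho>. k < n \<Longrightarrow> \<rho> \<in> U \<Longrightarrow> (D k has_real_derivative D (Suc k) \<rho>) (at \<rho>)"
  shows "k \<le> n \<Longrightarrow> \<rho> \<in> U \<Longrightarrow> (deriv ^^ k) (D 0) \<rho> = D k \<rho>"
proof (induction k arbitrary: \<rho>)
  case (Suc k)
  have "\<forall>\<^sub>F \<sigma> in nhds \<rho>. (deriv ^^ k) (D 0) \<sigma> = D k \<sigma>"
    using eventually_nhds_in_open[OF U Suc.prems(2)]
    by eventually_elim (use Suc in auto)
  then have "(deriv ^^ Suc k) (D 0) \<rho> = deriv (D k) \<rho>"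
    by (simp add: deriv_cong_ev)
  also have "\<dots> = D (Suc k) \<rho>"
    using D Suc.prems by (intro DERIV_imp_deriv) auto
  finally show ?case .
qed simp

lemma has_real_derivative_funpow_deriv:
  fixes D :: "nat \<Rightarrow> real \<Rightarrow> real"
  assumes U: "open U"
    and D: "\<And>k \<rho>. k < n \<Longrightarrow> \<rho> \<in> U \<Longrightarrow> (D k has_real_derivative D (Suc k) \<rho>) (at \<rho>)"
    and k: "k < n" and \<rho>: "\<rho> \<in> U"
  shows "((deriv ^^ k) (D 0) has_real_derivative (deriv ^^ Suc k) (D 0) \<rho>) (at \<rho>)"
proof -
  note D_eq = funpow_deriv_eq_on_open[where n=n and D=D, OF U D]
  have "(D k has_real_derivative (deriv ^^ Suc k) (D 0) \<rho>) (at \<rho>)"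
    using D[OF k \<rho>] D_eq[of "Suc k" \<rho>] k \<rho> by simp
  then show ?thesis
    by (rule has_field_derivative_transform_within_open[OF _ U \<rho>]) (use D_eq k in auto)
qed

locale abel_equation =
  fixes f g :: "real \<Rightarrow> real" and x :: "real \<Rightarrow> real \<Rightarrow> real" and \<delta> B :: real
  assumes f_cont: "continuous_on {-1..1} f" and g_cont: "continuous_on {-1..1} g"
    and f_bound: "\<And>s. s \<in> {-1..1} \<Longrightarrow> \<bar>f s\<bar> \<le> B"
    and g_bound: "\<And>s. s \<in> {-1..1} \<Longrightarrow> \<bar>g s\<bar> \<le> B"
    and B_ge_1: "B \<ge> 1"
    and \<delta>_pos: "\<delta> > 0"
    and ode: "\<And>\<rho> t. \<bar>\<rho>\<bar> < \<delta> \<Longrightarrow> t \<in> {-1..1} \<Longrightarrow>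
        ((\<lambda>s. x s \<rho>) has_real_derivative (f t * (x t \<rho>) ^ 3 + g t * (x t \<rho>) ^ 2))
          (at t within {-1..1})"
    and init: "\<And>\<rho>. \<bar>\<rho>\<bar> < \<delta> \<Longrightarrow> x (-1) \<rho> = \<rho>"
begin

lemma continuous_on_x: "\<bar>\<rho>\<bar> < \<delta> \<Longrightarrow> continuous_on {-1..1} (\<lambda>s. x s \<rho>)"
  unfolding continuous_on_eq_continuous_within using ode DERIV_continuous by blast

lemma coeff_bound: "s \<in> {-1..1} \<Longrightarrow> \<bar>f s * p + g s * q\<bar> \<le> B * (\<bar>p\<bar> + \<bar>q\<bar>)"
proof -
  assume s: "s \<in> {-1..1}"
  have "\<bar>f s * p + g s * q\<bar> \<le> \<bar>f s\<bar> * \<bar>p\<bar> + \<bar>g s\<bar> * \<bar>q\<bar>"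
    by (metis abs_mult abs_triangle_ineq)
  also have "\<dots> \<le> B * \<bar>p\<bar> + B * \<bar>q\<bar>"
    using f_bound[OF s] g_bound[OF s] by (intro add_mono mult_right_mono) auto
  finally show ?thesis
    by (simp add: algebra_simps)
qed

lemma x_eq_exp_integral:
  assumes \<rho>: "\<bar>\<rho>\<bar> < \<delta>" and t: "t \<in> {-1..1}"
  shows "x t \<rho> = \<rho> * exp (integral {-1..t} (\<lambda>s. f s * (x s \<rho>)\<^sup>2 + g s * x s \<rho>))"
proof -
  have "x t \<rho> = x (-1) \<rho> * exp (integral {-1..t} (\<lambda>s. f s * (x s \<rho>)\<^sup>2 + g s * x s \<rho>))"
  proof (rule linear_ode_eq_exp_integral[OF _ _ t])
    show "continuous_on {-1..1} (\<lambda>s. f s * (x s \<rho>)\<^sup>2 + g s * x s \<rho>)"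
      using f_cont g_cont continuous_on_x[OF \<rho>] by (intro continuous_intros)
    show "((\<lambda>s. x s \<rho>) has_real_derivative (f s * (x s \<rho>)\<^sup>2 + g s * x s \<rho>) * x s \<rho>)
        (at s within {-1..1})" if "s \<in> {-1..1}" for s
      using ode[OF \<rho> that] by (simp add: power2_eq_square power3_eq_cube algebra_simps)
  qed
  with init[OF \<rho>] show ?thesis
    by simp
qed

lemma x_zero: "t \<in> {-1..1} \<Longrightarrow> x t 0 = 0"
  using x_eq_exp_integral[of 0 t] \<delta>_pos by simp

text \<open>The difference quotient of \<open>y \<mapsto> f s y\<^sup>3 + g s y\<^sup>2\<close> between \<open>x s \<sigma>\<close> and \<open>x s \<rho>\<close>; for
\<open>\<sigma> = \<rho>\<close> it becomes the derivative \<open>lin_coeff \<rho> s\<close> defined below.\<close>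

definition diff_coeff :: "real \<Rightarrow> real \<Rightarrow> real \<Rightarrow> real" where
  "diff_coeff \<sigma> \<rho> s =
     f s * ((x s \<sigma>)\<^sup>2 + x s \<sigma> * x s \<rho> + (x s \<rho>)\<^sup>2) + g s * (x s \<sigma> + x s \<rho>)"

lemma x_diff_eq_exp_integral:
  assumes \<sigma>: "\<bar>\<sigma>\<bar> < \<delta>" and \<rho>: "\<bar>\<rho>\<bar> < \<delta>" and t: "t \<in> {-1..1}"
  shows "x t \<sigma> - x t \<rho> = (\<sigma> - \<rho>) * exp (integral {-1..t} (diff_coeff \<sigma> \<rho>))"
proof -
  have "x t \<sigma> - x t \<rho> = (x (-1) \<sigma> - x (-1) \<rho>) * exp (integral {-1..t} (diff_coeff \<sigma> \<rho>))"
  proof (rule linear_ode_eq_exp_integral[OF _ _ t])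
    show "continuous_on {-1..1} (diff_coeff \<sigma> \<rho>)"
      unfolding diff_coeff_def using f_cont g_cont continuous_on_x[OF \<sigma>] continuous_on_x[OF \<rho>]
      by (intro continuous_intros)
    show "((\<lambda>s. x s \<sigma> - x s \<rho>) has_real_derivative diff_coeff \<sigma> \<rho> s * (x s \<sigma> - x s \<rho>))
        (at s within {-1..1})" if "s \<in> {-1..1}" for s
      using DERIV_diff[OF ode[OF \<sigma> that] ode[OF \<rho> that]]
      by (simp add: diff_coeff_def power2_eq_square power3_eq_cube algebra_simps)
  qed
  with init[OF \<sigma>] init[OF \<rho>] show ?thesis
    by simp
qed

text \<open>Chosen so that \<open>|x| \<le> 2\<epsilon>\<close> forces all the exponents above to be at most \<open>1/2\<close>.\<close>

definition \<epsilon> :: real where "\<epsilon> = min \<delta> (1 / (64 * B))"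

lemma \<epsilon>_pos: "\<epsilon> > 0"
  using \<delta>_pos B_ge_1 by (simp add: \<epsilon>_def)

lemma \<epsilon>_le_\<delta>: "\<epsilon> \<le> \<delta>"
  by (simp add: \<epsilon>_def)

lemma \<epsilon>_mult_B_le: "64 * B * \<epsilon> \<le> 1"
proof -
  have "\<epsilon> \<le> 1 / (64 * B)"
    by (simp add: \<epsilon>_def)
  then show ?thesis
    using B_ge_1 by (simp add: field_simps)
qed

lemma \<epsilon>_le: "64 * \<epsilon> \<le> 1"
  using \<epsilon>_mult_B_le mult_right_mono[OF B_ge_1, of \<epsilon>] \<epsilon>_pos by linarith

lemma x_bound_improves:
  assumes \<rho>: "\<bar>\<rho>\<bar> < \<epsilon>" and t: "t \<in> {-1..1}"
    and below: "\<And>s. s \<in> {-1..t} \<Longrightarrow> \<bar>x s \<rho>\<bar> \<le> 2 * \<bar>\<rho>\<bar>"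
  shows "\<bar>x t \<rho>\<bar> \<le> 3/2 * \<bar>\<rho>\<bar>"
proof -
  have \<rho>': "\<bar>\<rho>\<bar> < \<delta>"
    using \<rho> \<epsilon>_le_\<delta> by simp
  define c where "c = (\<lambda>s. f s * (x s \<rho>)\<^sup>2 + g s * x s \<rho>)"
  have "\<bar>c s\<bar> \<le> 1/8" if s: "s \<in> {-1..t}" for s
  proof -
    have x_s: "\<bar>x s \<rho>\<bar> \<le> 2 * \<epsilon>"
      using below[OF s] \<rho> by linarith
    moreover have "2 * \<epsilon> \<le> 1"
      using \<epsilon>_le by simp
    ultimately have "\<bar>x s \<rho>\<bar> * \<bar>x s \<rho>\<bar> \<le> 1 * \<bar>x s \<rho>\<bar>"
      by (intro mult_right_mono) auto
    then have "\<bar>(x s \<rho>)\<^sup>2\<bar> + \<bar>x s \<rho>\<bar> \<le> 2 * \<bar>x s \<rho>\<bar>"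
      by (simp add: power2_eq_square abs_mult)
    then have "B * (\<bar>(x s \<rho>)\<^sup>2\<bar> + \<bar>x s \<rho>\<bar>) \<le> B * (2 * \<bar>x s \<rho>\<bar>)"
      using B_ge_1 by (intro mult_left_mono) auto
    moreover have "s \<in> {-1..1}"
      using s t by simp
    ultimately have "\<bar>c s\<bar> \<le> B * (2 * \<bar>x s \<rho>\<bar>)"
      using coeff_bound[of s "(x s \<rho>)\<^sup>2" "x s \<rho>"] unfolding c_def by linarith
    also have "\<dots> \<le> B * (4 * \<epsilon>)"
      using x_s B_ge_1 by (intro mult_left_mono) auto
    also have "\<dots> \<le> 1/8"
      using \<epsilon>_mult_B_le by simp
    finally show ?thesis .
  qed
  then have "\<bar>integral {-1..t} c\<bar> \<le> 1/4"
    using abs_integral_upper_le[of "-1" 1 c t "1/8"] t f_cont g_cont continuous_on_x[OF \<rho>']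
    unfolding c_def by (force intro!: continuous_intros)
  then have "exp (integral {-1..t} c) \<le> 3/2"
    using exp_bound_lemma[of "integral {-1..t} c"] by simp
  then have "\<bar>\<rho>\<bar> * exp (integral {-1..t} c) \<le> \<bar>\<rho>\<bar> * (3/2)"
    by (intro mult_left_mono) auto
  then show ?thesis
    using x_eq_exp_integral[OF \<rho>' t] by (simp add: c_def abs_mult)
qed

lemma x_small:
  assumes \<rho>: "\<bar>\<rho>\<bar> < \<epsilon>" and t: "t \<in> {-1..1}"
  shows "\<bar>x t \<rho>\<bar> \<le> 2 * \<bar>\<rho>\<bar>"
proof (cases "\<rho> = 0")
  case True
  then show ?thesis
    using x_zero[OF t] by simp
next
  case False
  have "\<bar>x (-1) \<rho>\<bar> < 2 * \<bar>\<rho>\<bar>"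
    using init \<rho> \<epsilon>_le_\<delta> False by simp
  moreover have "continuous_on {-1..1} (\<lambda>s. \<bar>x s \<rho>\<bar>)"
    using continuous_on_x \<rho> \<epsilon>_le_\<delta> by (intro continuous_intros) simp
  moreover have "3/2 * \<bar>\<rho>\<bar> < 2 * \<bar>\<rho>\<bar>"
    using False by simp
  ultimately have "\<bar>x t \<rho>\<bar> < 2 * \<bar>\<rho>\<bar>"
    using bootstrap_continuous_on_less[of "-1" 1 "\<lambda>s. \<bar>x s \<rho>\<bar>" "2 * \<bar>\<rho>\<bar>" t]
      x_bound_improves[OF \<rho>] t by fastforce
  then show ?thesis
    by simp
qed

definition U :: "real set" where "U = {-\<epsilon><..<\<epsilon>}"

lemma open_U: "open U" and convex_U: "convex U" and zero_in_U: "0 \<in> U"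
  using \<epsilon>_pos by (auto simp: U_def)

lemma U_iff: "\<rho> \<in> U \<longleftrightarrow> \<bar>\<rho>\<bar> < \<epsilon>"
  by (auto simp: U_def)

lemma U_imp_less_\<delta>: "\<rho> \<in> U \<Longrightarrow> \<bar>\<rho>\<bar> < \<delta>"
  using \<epsilon>_le_\<delta> by (auto simp: U_iff)

lemma diff_coeff_bound:
  assumes \<sigma>: "\<sigma> \<in> U" and \<rho>: "\<rho> \<in> U" and s: "s \<in> {-1..1}"
  shows "\<bar>diff_coeff \<sigma> \<rho> s\<bar> \<le> 1/4"
proof -
  define p q where "p = x s \<sigma>" and "q = x s \<rho>"
  have p: "\<bar>p\<bar> \<le> 2 * \<epsilon>" and q: "\<bar>q\<bar> \<le> 2 * \<epsilon>"
    using x_small[OF \<sigma>[unfolded U_iff] s] x_small[OF \<rho>[unfolded U_iff] s] \<sigma> \<rho>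
    unfolding U_iff p_def q_def by linarith+
  have "\<bar>p\<^sup>2 + p * q + q\<^sup>2\<bar> \<le> \<bar>p * p\<bar> + \<bar>p * q\<bar> + \<bar>q * q\<bar>"
    by (simp add: power2_eq_square abs_triangle_ineq order_trans[OF abs_triangle_ineq])
  also have "\<dots> = \<bar>p\<bar> * \<bar>p\<bar> + \<bar>p\<bar> * \<bar>q\<bar> + \<bar>q\<bar> * \<bar>q\<bar>"
    by (simp add: abs_mult)
  also have "\<dots> \<le> (2 * \<epsilon>) * (2 * \<epsilon>) + (2 * \<epsilon>) * (2 * \<epsilon>) + (2 * \<epsilon>) * (2 * \<epsilon>)"
    using p q by (intro add_mono mult_mono) auto
  also have "\<dots> \<le> 6 * \<epsilon>"
    using \<epsilon>_le \<epsilon>_pos by (simp add: algebra_simps mult_left_le_one_le)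
  finally have "\<bar>p\<^sup>2 + p * q + q\<^sup>2\<bar> + \<bar>p + q\<bar> \<le> 10 * \<epsilon>"
    using p q by linarith
  then have "B * (\<bar>p\<^sup>2 + p * q + q\<^sup>2\<bar> + \<bar>p + q\<bar>) \<le> B * (10 * \<epsilon>)"
    using B_ge_1 by (intro mult_left_mono) auto
  moreover have "B * (10 * \<epsilon>) \<le> 1/4"
    using \<epsilon>_mult_B_le by simp
  ultimately show ?thesis
    using coeff_bound[OF s, of "p\<^sup>2 + p * q + q\<^sup>2" "p + q"]
    unfolding diff_coeff_def p_def q_def by linarith
qed

lemma x_lipschitz:
  assumes \<sigma>: "\<sigma> \<in> U" and \<rho>: "\<rho> \<in> U" and t: "t \<in> {-1..1}"
  shows "\<bar>x t \<sigma> - x t \<rho>\<bar> \<le> 2 * \<bar>\<sigma> - \<rho>\<bar>"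
proof -
  have "continuous_on {-1..1} (diff_coeff \<sigma> \<rho>)"
    unfolding diff_coeff_def using f_cont g_cont continuous_on_x[OF U_imp_less_\<delta>] \<sigma> \<rho>
    by (intro continuous_intros) auto
  then have "\<bar>integral {-1..t} (diff_coeff \<sigma> \<rho>)\<bar> \<le> 1/2"
    using abs_integral_upper_le[OF _ t, of _ "1/4"] diff_coeff_bound[OF \<sigma> \<rho>] t by force
  then have "exp (integral {-1..t} (diff_coeff \<sigma> \<rho>)) \<le> 2"
    using exp_bound_lemma[of "integral {-1..t} (diff_coeff \<sigma> \<rho>)"] by simp
  then have "\<bar>\<sigma> - \<rho>\<bar> * exp (integral {-1..t} (diff_coeff \<sigma> \<rho>)) \<le> \<bar>\<sigma> - \<rho>\<bar> * 2"
    by (intro mult_left_mono) auto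
  then show ?thesis
    using x_diff_eq_exp_integral[OF U_imp_less_\<delta>[OF \<sigma>] U_imp_less_\<delta>[OF \<rho>] t]
    by (simp add: abs_mult)
qed

lemma continuous_on_x_param: "continuous_on (U \<times> {-1..1}) (\<lambda>p. x (snd p) (fst p))"
  using continuous_on_prod_lipschitz_param[of U "{-1..1}" "\<lambda>\<rho> t. x t \<rho>" 2]
    continuous_on_x[OF U_imp_less_\<delta>] x_lipschitz
  by (simp add: dist_real_def)

lemma continuous_on_f_param: "continuous_on (U \<times> {-1..1}) (\<lambda>p. f (snd p))"
  and continuous_on_g_param: "continuous_on (U \<times> {-1..1}) (\<lambda>p. g (snd p))"
  by (intro continuous_on_snd_comp f_cont g_cont)+

definition lin_coeff :: "real \<Rightarrow> real \<Rightarrow> real" where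
  "lin_coeff \<rho> s = 3 * f s * (x s \<rho>)\<^sup>2 + 2 * g s * x s \<rho>"

definition dx :: "real \<Rightarrow> real \<Rightarrow> real" where
  "dx \<rho> t = exp (integral {-1..t} (lin_coeff \<rho>))"

lemma has_real_derivative_x:
  assumes \<rho>: "\<rho> \<in> U" and t: "t \<in> {-1..1}"
  shows "((\<lambda>\<sigma>. x t \<sigma>) has_real_derivative dx \<rho> t) (at \<rho>)"
proof -
  define E where "E \<sigma> = exp (integral (cbox (-1) t) (\<lambda>s. diff_coeff \<sigma> \<rho> s))" for \<sigma>
  have "continuous_on (U \<times> {-1..1}) (\<lambda>p. diff_coeff (fst p) \<rho> (snd p))"
    unfolding diff_coeff_def
    by (intro continuous_on_f_param continuous_on_g_param continuous_on_x_param
        continuous_on_snd_comp continuous_on_x U_imp_less_\<delta>[OF \<rho>] continuous_intros)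
  moreover have "U \<times> cbox (-1) t \<subseteq> U \<times> {-1..1}"
    using t by auto
  ultimately have "continuous_on (U \<times> cbox (-1) t) (\<lambda>p. diff_coeff (fst p) \<rho> (snd p))"
    by (rule continuous_on_subset)
  then have "continuous_on U E"
    unfolding E_def by (intro continuous_on_exp integral_continuous_on_param) (simp add: case_prod_beta)
  then have "(E \<longlongrightarrow> E \<rho>) (at \<rho>)"
    using \<rho> open_U continuous_on_eq_continuous_at isContD by blast
  moreover have "E \<rho> = dx \<rho> t"
    unfolding E_def dx_def diff_coeff_def lin_coeff_def
    by (simp add: power2_eq_square algebra_simps)
  moreover have "\<forall>\<^sub>F \<sigma> in at \<rho>. E \<sigma> = (x t \<sigma> - x t \<rho>) / (\<sigma> - \<rho>)"
    using eventually_at_in_open[OF open_U \<rho>]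
  proof eventually_elim
    case (elim \<sigma>)
    then show ?case
      using x_diff_eq_exp_integral[OF U_imp_less_\<delta> U_imp_less_\<delta>[OF \<rho>] t, of \<sigma>] by (simp add: E_def)
  qed
  ultimately show ?thesis
    unfolding has_field_derivative_iff using tendsto_cong by force
qed

definition dlin_coeff :: "real \<Rightarrow> real \<Rightarrow> real" where
  "dlin_coeff \<rho> s = (6 * f s * x s \<rho> + 2 * g s) * dx \<rho> s"

definition d2x :: "real \<Rightarrow> real \<Rightarrow> real" where
  "d2x \<rho> t = dx \<rho> t * integral {-1..t} (dlin_coeff \<rho>)"

definition d2lin_coeff :: "real \<Rightarrow> real \<Rightarrow> real" where
  "d2lin_coeff \<rho> s = 6 * f s * (dx \<rho> s)\<^sup>2 + (6 * f s * x s \<rho> + 2 * g s) * d2x \<rho> s"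

definition d3x :: "real \<Rightarrow> real \<Rightarrow> real" where
  "d3x \<rho> t = d2x \<rho> t * integral {-1..t} (dlin_coeff \<rho>) + dx \<rho> t * integral {-1..t} (d2lin_coeff \<rho>)"

lemma continuous_on_lin_coeff: "continuous_on (U \<times> {-1..1}) (\<lambda>p. lin_coeff (fst p) (snd p))"
  unfolding lin_coeff_def
  by (intro continuous_on_f_param continuous_on_g_param continuous_on_x_param continuous_intros)

lemma continuous_on_dx: "continuous_on (U \<times> {-1..1}) (\<lambda>p. dx (fst p) (snd p))"
  unfolding dx_def
  by (intro continuous_on_exp continuous_on_integral_upper_param continuous_on_lin_coeff)

lemma continuous_on_dlin_coeff: "continuous_on (U \<times> {-1..1}) (\<lambda>p. dlin_coeff (fst p) (snd p))"
  unfolding dlin_coeff_def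
  by (intro continuous_on_f_param continuous_on_g_param continuous_on_x_param continuous_on_dx
      continuous_intros)

lemma continuous_on_d2x: "continuous_on (U \<times> {-1..1}) (\<lambda>p. d2x (fst p) (snd p))"
  unfolding d2x_def
  by (intro continuous_on_dx continuous_on_integral_upper_param continuous_on_dlin_coeff
      continuous_intros)

lemma continuous_on_d2lin_coeff: "continuous_on (U \<times> {-1..1}) (\<lambda>p. d2lin_coeff (fst p) (snd p))"
  unfolding d2lin_coeff_def
  by (intro continuous_on_f_param continuous_on_g_param continuous_on_x_param continuous_on_dx
      continuous_on_d2x continuous_intros)

lemma continuous_on_d3x: "continuous_on (U \<times> {-1..1}) (\<lambda>p. d3x (fst p) (snd p))"
  unfolding d3x_def
  by (intro continuous_on_dx continuous_on_d2x continuous_on_integral_upper_param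
      continuous_on_dlin_coeff continuous_on_d2lin_coeff continuous_intros)

lemma has_real_derivative_lin_coeff:
  "\<rho> \<in> U \<Longrightarrow> s \<in> {-1..1} \<Longrightarrow> ((\<lambda>\<sigma>. lin_coeff \<sigma> s) has_real_derivative dlin_coeff \<rho> s) (at \<rho>)"
  unfolding lin_coeff_def dlin_coeff_def
  by (auto intro!: derivative_eq_intros has_real_derivative_x simp: power2_eq_square algebra_simps)

lemma has_real_derivative_dx:
  assumes \<rho>: "\<rho> \<in> U" and t: "t \<in> {-1..1}"
  shows "((\<lambda>\<sigma>. dx \<sigma> t) has_real_derivative d2x \<rho> t) (at \<rho>)"
proof -
  have "((\<lambda>\<sigma>. integral {-1..t} (lin_coeff \<sigma>)) has_real_derivative integral {-1..t} (dlin_coeff \<rho>))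
      (at \<rho>)"
    by (rule has_real_derivative_integral_param[OF open_U convex_U \<rho> t has_real_derivative_lin_coeff
          continuous_on_lin_coeff continuous_on_dlin_coeff])
  from DERIV_chain2[OF DERIV_exp this] show ?thesis
    by (simp add: dx_def d2x_def)
qed

lemma has_real_derivative_dlin_coeff:
  "\<rho> \<in> U \<Longrightarrow> s \<in> {-1..1} \<Longrightarrow> ((\<lambda>\<sigma>. dlin_coeff \<sigma> s) has_real_derivative d2lin_coeff \<rho> s) (at \<rho>)"
  unfolding dlin_coeff_def d2lin_coeff_def
  by (auto intro!: derivative_eq_intros has_real_derivative_x has_real_derivative_dx
      simp: power2_eq_square algebra_simps)

lemma has_real_derivative_d2x:
  assumes \<rho>: "\<rho> \<in> U" and t: "t \<in> {-1..1}"
  shows "((\<lambda>\<sigma>. d2x \<sigma> t) has_real_derivative d3x \<rho> t) (at \<rho>)"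
proof -
  have "((\<lambda>\<sigma>. integral {-1..t} (dlin_coeff \<sigma>)) has_real_derivative integral {-1..t} (d2lin_coeff \<rho>))
      (at \<rho>)"
    by (rule has_real_derivative_integral_param[OF open_U convex_U \<rho> t has_real_derivative_dlin_coeff
          continuous_on_dlin_coeff continuous_on_d2lin_coeff])
  from DERIV_mult[OF has_real_derivative_dx[OF \<rho> t] this] show ?thesis
    by (simp add: d2x_def d3x_def algebra_simps)
qed

definition h0 :: "real \<Rightarrow> real" where "h0 \<rho> = integral {-1..1} (\<lambda>s. f s * x s \<rho> + g s)"
definition h1 :: "real \<Rightarrow> real" where "h1 \<rho> = integral {-1..1} (\<lambda>s. f s * dx \<rho> s)"
definition h2 :: "real \<Rightarrow> real" where "h2 \<rho> = integral {-1..1} (\<lambda>s. f s * d2x \<rho> s)"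
definition h3 :: "real \<Rightarrow> real" where "h3 \<rho> = integral {-1..1} (\<lambda>s. f s * d3x \<rho> s)"

lemma has_real_derivative_integral_f_mult:
  assumes y: "\<And>\<rho> s. \<rho> \<in> U \<Longrightarrow> s \<in> {-1..1} \<Longrightarrow> ((\<lambda>\<sigma>. y \<sigma> s) has_real_derivative z \<rho> s) (at \<rho>)"
    and y_cont: "continuous_on (U \<times> {-1..1}) (\<lambda>p. y (fst p) (snd p))"
    and z_cont: "continuous_on (U \<times> {-1..1}) (\<lambda>p. z (fst p) (snd p))"
    and c_cont: "continuous_on {-1..1} c"
    and \<rho>: "\<rho> \<in> U"
  shows "((\<lambda>\<sigma>. integral {-1..1} (\<lambda>s. f s * y \<sigma> s + c s)) has_real_derivative
      integral {-1..1} (\<lambda>s. f s * z \<rho> s)) (at \<rho>)"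
  by (rule has_real_derivative_integral_param[OF open_U convex_U \<rho>, of 1])
     (auto intro!: derivative_eq_intros y continuous_on_f_param y_cont z_cont
        continuous_on_snd_comp[OF c_cont] continuous_intros)

lemma h_deriv_chain:
  assumes "k < 3" and \<rho>: "\<rho> \<in> U"
  shows "([h0, h1, h2, h3] ! k has_real_derivative ([h0, h1, h2, h3] ! Suc k) \<rho>) (at \<rho>)"
proof -
  have "(h0 has_real_derivative h1 \<rho>) (at \<rho>)"
    using has_real_derivative_integral_f_mult[OF has_real_derivative_x continuous_on_x_param
        continuous_on_dx g_cont \<rho>]
    by (simp add: h0_def[abs_def] h1_def)
  moreover have "(h1 has_real_derivative h2 \<rho>) (at \<rho>)"
    using has_real_derivative_integral_f_mult[OF has_real_derivative_dx continuous_on_dx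
        continuous_on_d2x continuous_on_const[of _ 0] \<rho>]
    by (simp add: h1_def[abs_def] h2_def)
  moreover have "(h2 has_real_derivative h3 \<rho>) (at \<rho>)"
    using has_real_derivative_integral_f_mult[OF has_real_derivative_d2x continuous_on_d2x
        continuous_on_d3x continuous_on_const[of _ 0] \<rho>]
    by (simp add: h2_def[abs_def] h3_def)
  ultimately show ?thesis
    using \<open>k < 3\<close> by (auto simp: less_Suc_eq numeral_3_eq_3)
qed

lemma continuous_on_indefinite_integral_f: "continuous_on {-1..1} (\<lambda>t. integral {-1..t} f)"
  and continuous_on_indefinite_integral_g: "continuous_on {-1..1} (\<lambda>t. integral {-1..t} g)"
  by (intro indefinite_integral_continuous_1 integrable_continuous_interval f_cont g_cont)+

lemma dx_zero: "t \<in> {-1..1} \<Longrightarrow> dx 0 t = 1"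
proof -
  assume t: "t \<in> {-1..1}"
  have "integral {-1..t} (lin_coeff 0) = integral {-1..t} (\<lambda>s. 0)"
    by (rule integral_cong) (use t x_zero in \<open>auto simp: lin_coeff_def\<close>)
  then show ?thesis
    by (simp add: dx_def)
qed

lemma integral_dlin_coeff_zero:
  "t \<in> {-1..1} \<Longrightarrow> integral {-1..t} (dlin_coeff 0) = 2 * integral {-1..t} g"
proof -
  assume t: "t \<in> {-1..1}"
  have "integral {-1..t} (dlin_coeff 0) = integral {-1..t} (\<lambda>s. 2 * g s)"
    by (rule integral_cong) (use t x_zero dx_zero in \<open>auto simp: dlin_coeff_def\<close>)
  then show ?thesis
    by simp
qed

lemma d2x_zero: "t \<in> {-1..1} \<Longrightarrow> d2x 0 t = 2 * integral {-1..t} g"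
  by (simp add: d2x_def dx_zero integral_dlin_coeff_zero)

lemma integral_d2lin_coeff_zero:
  assumes t: "t \<in> {-1..1}"
  shows "integral {-1..t} (d2lin_coeff 0) = 6 * integral {-1..t} f + 2 * (integral {-1..t} g)\<^sup>2"
proof -
  have "integral {-1..t} (d2lin_coeff 0)
      = integral {-1..t} (\<lambda>s. 6 * f s + 4 * (g s * integral {-1..s} g))"
    by (rule integral_cong) (use t x_zero dx_zero d2x_zero in \<open>auto simp: d2lin_coeff_def\<close>)
  also have "\<dots> = integral {-1..t} (\<lambda>s. 6 * f s)
      + integral {-1..t} (\<lambda>s. 4 * (g s * integral {-1..s} g))"
    by (intro integral_add
          integrable_on_subinterval[OF integrable_continuous_interval[where a="-1" and b=1]])
       (use t in \<open>auto intro!: continuous_intros f_cont g_cont continuous_on_indefinite_integral_g\<close>)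
  finally show ?thesis
    using integral_mult_indefinite_integral[OF g_cont t] by simp
qed

lemma d3x_zero:
  "t \<in> {-1..1} \<Longrightarrow> d3x 0 t = 6 * (integral {-1..t} g)\<^sup>2 + 6 * integral {-1..t} f"
  by (simp add: d3x_def dx_zero d2x_zero integral_dlin_coeff_zero integral_d2lin_coeff_zero
      power2_eq_square algebra_simps)

lemma h1_zero: "h1 0 = integral {-1..1} f"
  unfolding h1_def by (rule integral_cong) (simp add: dx_zero)

lemma h2_zero: "h2 0 = 2 * integral {-1..1} (\<lambda>t. f t * integral {-1..t} g)"
proof -
  have "h2 0 = integral {-1..1} (\<lambda>t. 2 * (f t * integral {-1..t} g))"
    unfolding h2_def by (rule integral_cong) (simp add: d2x_zero)
  then show ?thesis
    by simp
qed

lemma h3_zero: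
  "h3 0 = 6 * integral {-1..1} (\<lambda>t. f t * (integral {-1..t} g)\<^sup>2)
        + 6 * integral {-1..1} (\<lambda>t. f t * integral {-1..t} f)"
proof -
  have "h3 0 = integral {-1..1} (\<lambda>t. 6 * (f t * (integral {-1..t} g)\<^sup>2) + 6 * (f t * integral {-1..t} f))"
    unfolding h3_def by (rule integral_cong) (simp add: d3x_zero algebra_simps)
  also have "\<dots> = 6 * integral {-1..1} (\<lambda>t. f t * (integral {-1..t} g)\<^sup>2)
        + 6 * integral {-1..1} (\<lambda>t. f t * integral {-1..t} f)"
    by (simp add: integral_add integrable_continuous_interval continuous_intros f_cont
        continuous_on_indefinite_integral_f continuous_on_indefinite_integral_g)
  finally show ?thesis .
qed

end

theorem lemma2:
  fixes f g :: "real \<Rightarrow> real" and x :: "real \<Rightarrow> real \<Rightarrow> real" and \<delta> :: real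
  assumes f_an: "real_analytic_on f {-1..1}"
    and g_an: "real_analytic_on g {-1..1}"
    and \<delta>_pos: "\<delta> > 0"
    and ode: "\<And>\<rho> t. \<bar>\<rho>\<bar> < \<delta> \<Longrightarrow> t \<in> {-1..1} \<Longrightarrow>
        ((\<lambda>s. x s \<rho>) has_real_derivative (f t * (x t \<rho>) ^ 3 + g t * (x t \<rho>) ^ 2))
          (at t within {-1..1})"
    and init: "\<And>\<rho>. \<bar>\<rho>\<bar> < \<delta> \<Longrightarrow> x (-1) \<rho> = \<rho>"
  defines "H \<equiv> (\<lambda>t \<rho>. integral {-1..t} (\<lambda>s. f s * x s \<rho> + g s))"
    and "G \<equiv> (\<lambda>t. integral {-1..t} g)"
    and "F \<equiv> (\<lambda>t. integral {-1..t} f)"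
  shows "(\<forall>k<3. \<forall>\<^sub>F \<rho> in nhds 0.
            ((deriv ^^ k) (\<lambda>r. H 1 r) has_real_derivative (deriv ^^ Suc k) (\<lambda>r. H 1 r) \<rho>) (at \<rho>))
       \<and> (\<forall>j\<in>{1,2::nat}. (deriv ^^ j) (\<lambda>r. H 1 r) 0
              = fact j * integral {-1..1} (\<lambda>t. f t * G t ^ (j - 1)))
       \<and> (deriv ^^ 3) (\<lambda>r. H 1 r) 0
              = fact 3 * integral {-1..1} (\<lambda>t. f t * G t ^ 2)
                + fact 3 * integral {-1..1} (\<lambda>t. f t * F t)"
proof -
  have f_cont: "continuous_on {-1..1} f" and g_cont: "continuous_on {-1..1} g"
    using f_an g_an by (simp_all add: real_analytic_on_imp_continuous_on)
  obtain Bf Bg where Bf: "\<forall>s\<in>{-1..1}. \<bar>f s\<bar> \<le> Bf" and Bg: "\<forall>s\<in>{-1..1}. \<bar>g s\<bar> \<le> Bg"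
    using compact_imp_bounded[OF compact_continuous_image[OF f_cont compact_Icc]]
      compact_imp_bounded[OF compact_continuous_image[OF g_cont compact_Icc]]
    by (auto simp: bounded_iff)
  have "\<bar>f s\<bar> \<le> \<bar>Bf\<bar> + \<bar>Bg\<bar> + 1" "\<bar>g s\<bar> \<le> \<bar>Bf\<bar> + \<bar>Bg\<bar> + 1" if "s \<in> {-1..1}" for s
    using Bf Bg that by fastforce+
  then interpret abel_equation f g x \<delta> "\<bar>Bf\<bar> + \<bar>Bg\<bar> + 1"
    by (intro abel_equation.intro[OF f_cont g_cont _ _ _ \<delta>_pos ode init]) auto
  define D where "D = (!) [h0, h1, h2, h3]"
  have D: "\<And>k \<rho>. k < 3 \<Longrightarrow> \<rho> \<in> U \<Longrightarrow> (D k has_real_derivative D (Suc k) \<rho>) (at \<rho>)"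
    unfolding D_def by (rule h_deriv_chain)
  have H1: "(\<lambda>r. H 1 r) = D 0"
    by (simp add: D_def H_def h0_def[abs_def])
  have D_at_0: "(deriv ^^ k) (\<lambda>r. H 1 r) 0 = D k 0" if "k \<le> 3" for k
    unfolding H1 by (rule funpow_deriv_eq_on_open[where n=3 and D=D, OF open_U D that zero_in_U])
  have "\<forall>\<^sub>F \<rho> in nhds 0. ((deriv ^^ k) (\<lambda>r. H 1 r) has_real_derivative
      (deriv ^^ Suc k) (\<lambda>r. H 1 r) \<rho>) (at \<rho>)" if "k < 3" for k
    using eventually_nhds_in_open[OF open_U zero_in_U]
    by eventually_elim
      (unfold H1, rule has_real_derivative_funpow_deriv[where n=3 and D=D, OF open_U D that])
  moreover have "(deriv ^^ j) (\<lambda>r. H 1 r) 0 = fact j * integral {-1..1} (\<lambda>t. f t * G t ^ (j - 1))"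
    if "j \<in> {1, 2}" for j
    using that D_at_0[of 1] D_at_0[of 2] h1_zero h2_zero by (auto simp: D_def G_def)
  moreover have "(deriv ^^ 3) (\<lambda>r. H 1 r) 0 = fact 3 * integral {-1..1} (\<lambda>t. f t * G t ^ 2)
      + fact 3 * integral {-1..1} (\<lambda>t. f t * F t)"
    using D_at_0[of 3] h3_zero by (simp add: D_def G_def F_def fact_numeral)
  ultimately show ?thesis
    by blast
qed

end
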